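(* Let $(X,\Sigma)$ be a locally finite test space and let $\mathrm{Pl}$ be an Archimedean plausibility measure on it. Let $V$ be the $\mathbb{Q}$-vector space with basis $\{e_x:x\in X\}$. For an event $A$ write $e_A=\sum_{x\in A}e_x$, so that $e_\emptyset=0$. Let $C\subseteq V$ be the set of all finite linear combinations with non-negative rational coefficients of vectors $e_A-e_B$, where $A,B$ are events with $\mathrm{Pl}(A)\succeq\mathrm{Pl}(B)$. Then the following hold: (1) For any events $A,B$ with $\mathrm{Pl}(A)\prec\mathrm{Pl}(B)$, we have $e_A-e_B\notin C$. (2) For any test $T\in\Sigma$, $(V,C,e_T)$ is an order unit space over $\mathbb{Q}$.
   Context: A test space $(X,\Sigma)$ is a set $X$ of outcomes together with a set $\Sigma\subseteq 2^X$ of subsets (called tests) with $\bigcup_{T\in\Sigma}T=X$. It is locally finite if every test is finite. An event is a subset of $X$ contained in some test, and $E(X,\Sigma)$ denotes the set of events. A plausibility measure is a function $\mathrm{Pl}:E(X,\Sigma)\to D$, where $(D,\preceq)$ is a poset, satisfying three conditions: (i) $\mathrm{Pl}(T)=\mathrm{Pl}(R)$ for all tests $T,R$; (ii) $A\subseteq B$ implies $\mathrm{Pl}(A)\preceq\mathrm{Pl}(B)$; (iii) $\mathrm{Pl}(\emptyset)\prec\mathrm{Pl}(T)$ for tests $T$. Here $a\prec b$ means $a\preceq b$ and $b\not\preceq a$. $\mathrm{Pl}$ is Archimedean if the following holds for every $n\ge1$ and every pair of families of events $(A_1,\dots,A_n)$, $(B_1,\dots,B_n)$ such that each outcome lies in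 the same number of $A_i$'s as of $B_i$'s: whenever $\mathrm{Pl}(A_i)\preceq\mathrm{Pl}(B_i)$ for $i<n$, then $\mathrm{Pl}(A_n)\succeq\mathrm{Pl}(B_n)$. For a subfield $\mathbb{F}\subseteq\mathbb{R}$ and an $\mathbb{F}$-vector space $V$, a convex cone is a subset $C\subseteq V$ closed under addition and under multiplication by non-negative scalars. Write $a\ge b$ for $a-b\in C$. An order unit space is a triple $(V,C,u)$ with $C$ a convex cone and $u\in C$ such that both of the following hold: - $-u\notin C$; - for every $a\in V$ there is $\lambda\in\mathbb{F}$ with $\lambda u+a\in C$. *)

theory Defs
  imports Complex_Main
begin

definition test_space :: "'a set \<Rightarrow> 'a set set \<Rightarrow> bool" where
  "test_space X \<Sigma> \<longleftrightarrow> \<Sigma> \<subseteq> Pow X \<and> \<Union>\<Sigma> = X"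

definition locally_finite :: "'a set set \<Rightarrow> bool" where
  "locally_finite \<Sigma> \<longleftrightarrow> (\<forall>T\<in>\<Sigma>. finite T)"

definition events :: "'a set set \<Rightarrow> 'a set set" where
  "events \<Sigma> = {A. \<exists>T\<in>\<Sigma>. A \<subseteq> T}"

definition plausibility_measure :: "'a set set \<Rightarrow> ('a set \<Rightarrow> 'd::order) \<Rightarrow> bool" where
  "plausibility_measure \<Sigma> Pl \<longleftrightarrow>
     (\<forall>T\<in>\<Sigma>. \<forall>R\<in>\<Sigma>. Pl T = Pl R) \<and>
     (\<forall>A\<in>events \<Sigma>. \<forall>B\<in>events \<Sigma>. A \<subseteq> B \<longrightarrow> Pl A \<le> Pl B) \<and>
     (\<forall>T\<in>\<Sigma>. Pl {} < Pl T)"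

(* Archimedean: families indexed by 0..n-1; the last index n-1 plays the role of n *)
definition archimedean :: "'a set \<Rightarrow> 'a set set \<Rightarrow> ('a set \<Rightarrow> 'd::order) \<Rightarrow> bool" where
  "archimedean X \<Sigma> Pl \<longleftrightarrow>
     (\<forall>n::nat. \<forall>A B :: nat \<Rightarrow> 'a set.
        n \<ge> 1 \<longrightarrow>
        (\<forall>i<n. A i \<in> events \<Sigma> \<and> B i \<in> events \<Sigma>) \<longrightarrow>
        (\<forall>x\<in>X. card {i. i < n \<and> x \<in> A i} = card {i. i < n \<and> x \<in> B i}) \<longrightarrow>
        (\<forall>i<n - 1. Pl (A i) \<le> Pl (B i)) \<longrightarrow>
        Pl (B (n - 1)) \<le> Pl (A (n - 1)))"

(* The Q-vector space with basis {e_x : x \<in> X}: finitely supported functions X \<rightarrow> Q *)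
definition free_space :: "'a set \<Rightarrow> ('a \<Rightarrow> rat) set" where
  "free_space X = {v. finite {x. v x \<noteq> 0} \<and> {x. v x \<noteq> 0} \<subseteq> X}"

definition evec :: "'a set \<Rightarrow> ('a \<Rightarrow> rat)" where
  "evec A = (\<lambda>x. if x \<in> A then 1 else 0)"

definition plaus_cone :: "'a set set \<Rightarrow> ('a set \<Rightarrow> 'd::order) \<Rightarrow> ('a \<Rightarrow> rat) set" where
  "plaus_cone \<Sigma> Pl = {v. \<exists>(n::nat) (c::nat \<Rightarrow> rat) (A::nat \<Rightarrow> 'a set) (B::nat \<Rightarrow> 'a set).
      (\<forall>i<n. c i \<ge> 0 \<and> A i \<in> events \<Sigma> \<and> B i \<in> events \<Sigma> \<and> Pl (B i) \<le> Pl (A i)) \<and>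
      v = (\<lambda>x. \<Sum>i<n. c i * (evec (A i) x - evec (B i) x))}"

definition convex_cone :: "('a \<Rightarrow> rat) set \<Rightarrow> ('a \<Rightarrow> rat) set \<Rightarrow> bool" where
  "convex_cone V C \<longleftrightarrow> C \<subseteq> V \<and>
     (\<forall>a\<in>C. \<forall>b\<in>C. (\<lambda>x. a x + b x) \<in> C) \<and>
     (\<forall>r::rat. \<forall>a\<in>C. r \<ge> 0 \<longrightarrow> (\<lambda>x. r * a x) \<in> C)"

definition order_unit_space :: "('a \<Rightarrow> rat) set \<Rightarrow> ('a \<Rightarrow> rat) set \<Rightarrow> ('a \<Rightarrow> rat) \<Rightarrow> bool" where
  "order_unit_space V C u \<longleftrightarrow> convex_cone V C \<and> u \<in> C \<and>
     (\<lambda>x. - u x) \<notin> C \<and>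
     (\<forall>a\<in>V. \<exists>l::rat. (\<lambda>x. l * u x + a x) \<in> C)"

end

theory Submission
  imports Defs
begin

text \<open>
  Part (1) is where the Archimedean axiom enters. If \<open>e\<^sub>A - e\<^sub>B = \<Sum>\<^sub>i c\<^sub>i (e\<^bsub>A\<^sub>i\<^esub> - e\<^bsub>B\<^sub>i\<^esub>)\<close>
  with \<open>Pl A\<^sub>i \<succeq> Pl B\<^sub>i\<close>, clear denominators to get natural multiplicities
  \<open>k\<^sub>i\<close> and \<open>d > 0\<close> with \<open>d (e\<^sub>A - e\<^sub>B) = \<Sum>\<^sub>i k\<^sub>i (e\<^bsub>A\<^sub>i\<^esub> - e\<^bsub>B\<^sub>i\<^esub>)\<close>. The family consisting of
  \<open>k\<^sub>i\<close> copies of each pair \<open>(B\<^sub>i, A\<^sub>i)\<close> followed by \<open>d\<close> copies of \<open>(A, B)\<close> covers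
  every outcome equally often on both sides, so the Archimedean axiom forces
  \<open>Pl A \<succeq> Pl B\<close>.

  For (2), \<open>e\<^sub>T = e\<^sub>T - e\<^sub>\<emptyset>\<close> lies in \<open>C\<close>, and \<open>-e\<^sub>T = e\<^sub>\<emptyset> - e\<^sub>T \<notin> C\<close> by (1) since
  \<open>Pl \<emptyset> \<prec> Pl T\<close>. Every singleton is an event with \<open>Pl \<emptyset> \<preceq> Pl {x} \<preceq> Pl T\<close>, so
  \<open>e\<^sub>T \<pm> e\<^sub>x \<in> C\<close>; writing \<open>a = \<Sum>\<^sub>x a\<^sub>x e\<^sub>x\<close> gives \<open>(\<Sum>\<^sub>x |a\<^sub>x|) e\<^sub>T + a \<in> C\<close>.
\<close>

lemma sum_lessThan_add:
  fixes f :: "nat \<Rightarrow> 'b::comm_monoid_add"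
  shows "(\<Sum>i<m + k. f i) = (\<Sum>i<m. f i) + (\<Sum>i<k. f (m + i))"
  by (induction k) (simp_all add: add.assoc)

lemma sum_list_map_concat:
  "sum_list (map f (concat xss)) = (\<Sum>xs\<leftarrow>xss. sum_list (map f xs))"
  by (induction xss) simp_all

lemma rat_common_denominator:
  fixes c :: "'i \<Rightarrow> rat"
  assumes "finite I"
  shows "\<exists>d::nat. d > 0 \<and> (\<forall>i\<in>I. c i * of_nat d \<in> \<int>)"
proof -
  define q where "q i = snd (quotient_of (c i))" for i
  have q_pos: "q i > 0" for i
    by (simp add: q_def quotient_of_denom_pos')
  have cq_int: "c i * of_int (q i) \<in> \<int>" for i
  proof -
    obtain p where "quotient_of (c i) = (p, q i)"
      by (metis q_def prod.collapse)
    then have "c i = of_int p / of_int (q i)"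
      by (rule quotient_of_div)
    then show ?thesis
      using q_pos[of i] by simp
  qed
  define d where "d = nat (\<Prod>i\<in>I. q i)"
  have prod_pos: "(\<Prod>i\<in>I. q i) > 0"
    using q_pos by (simp add: prod_pos)
  have "c i * of_nat d \<in> \<int>" if "i \<in> I" for i
  proof -
    have "(of_nat d :: rat) = of_int (q i) * of_int (\<Prod>j\<in>I - {i}. q j)"
      using prod_pos assms that by (simp add: d_def prod.remove)
    then have "c i * of_nat d = (c i * of_int (q i)) * of_int (\<Prod>j\<in>I - {i}. q j)"
      by (simp only: mult.assoc)
    then show ?thesis
      using cq_int by (metis Ints_mult Ints_of_int)
  qed
  moreover have "d > 0"
    using prod_pos by (simp add: d_def)
  ultimately show ?thesis
    by blast
qed

lemma test_in_events: "T \<in> \<Sigma> \<Longrightarrow> T \<in> events \<Sigma>"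
  and empty_in_events: "T \<in> \<Sigma> \<Longrightarrow> {} \<in> events \<Sigma>"
  by (auto simp: events_def)

lemma plausibility_measure_test_eq:
  "plausibility_measure \<Sigma> Pl \<Longrightarrow> T \<in> \<Sigma> \<Longrightarrow> R \<in> \<Sigma> \<Longrightarrow> Pl T = Pl R"
  unfolding plausibility_measure_def by blast

lemma plausibility_measure_mono:
  "plausibility_measure \<Sigma> Pl \<Longrightarrow> A \<in> events \<Sigma> \<Longrightarrow> B \<in> events \<Sigma> \<Longrightarrow> A \<subseteq> B \<Longrightarrow> Pl A \<le> Pl B"
  unfolding plausibility_measure_def by blast

lemma plausibility_measure_empty_less:
  "plausibility_measure \<Sigma> Pl \<Longrightarrow> T \<in> \<Sigma> \<Longrightarrow> Pl {} < Pl T"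
  unfolding plausibility_measure_def by blast

lemma events_finite_subset:
  assumes "test_space X \<Sigma>" "locally_finite \<Sigma>" "A \<in> events \<Sigma>"
  shows "finite A \<and> A \<subseteq> X"
  using assms unfolding test_space_def locally_finite_def events_def
  by (auto intro: finite_subset)

lemma evec_empty [simp]: "evec {} = (\<lambda>_. 0)"
  by (simp add: evec_def)

lemma of_nat_length_filter_mem:
  "of_nat (length (filter (\<lambda>p. x \<in> f p) ps)) = (\<Sum>p\<leftarrow>ps. evec (f p) x)"
  by (induction ps) (simp_all add: evec_def)

lemma archimedean_balanced_list:
  assumes arch: "archimedean X \<Sigma> Pl" and "ps \<noteq> []"
    and events: "\<forall>p\<in>set ps. fst p \<in> events \<Sigma> \<and> snd p \<in> events \<Sigma>"
    and balanced: "\<forall>x\<in>X. (\<Sum>p\<leftarrow>ps. evec (fst p) x - evec (snd p) x) = 0"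
    and le: "\<forall>p\<in>set (butlast ps). Pl (fst p) \<le> Pl (snd p)"
  shows "Pl (snd (last ps)) \<le> Pl (fst (last ps))"
proof -
  have last: "last ps = ps ! (length ps - 1)"
    using \<open>ps \<noteq> []\<close> by (rule last_conv_nth)
  have "Pl (snd (ps ! (length ps - 1))) \<le> Pl (fst (ps ! (length ps - 1)))"
  proof (rule arch[unfolded archimedean_def, rule_format])
    show "1 \<le> length ps"
      using \<open>ps \<noteq> []\<close> by (simp add: Suc_le_eq)
  next
    fix i assume "i < length ps"
    then show "fst (ps ! i) \<in> events \<Sigma> \<and> snd (ps ! i) \<in> events \<Sigma>"
      using events nth_mem by blast
  next
    fix x assume "x \<in> X"
    then have "(of_nat (length (filter (\<lambda>p. x \<in> fst p) ps)) :: rat)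
             = of_nat (length (filter (\<lambda>p. x \<in> snd p) ps))"
      using balanced by (simp add: of_nat_length_filter_mem sum_list_subtractf)
    then show "card {i. i < length ps \<and> x \<in> fst (ps ! i)}
             = card {i. i < length ps \<and> x \<in> snd (ps ! i)}"
      by (simp only: of_nat_eq_iff length_filter_conv_card)
  next
    fix i assume "i < length ps - 1"
    then have "ps ! i \<in> set (butlast ps)"
      by (metis length_butlast nth_butlast nth_mem)
    then show "Pl (fst (ps ! i)) \<le> Pl (snd (ps ! i))"
      using le by blast
  qed
  then show ?thesis
    by (simp add: last)
qed

lemma plaus_cone_I:
  fixes n :: nat and c :: "nat \<Rightarrow> rat" and A B :: "nat \<Rightarrow> 'a set"
  assumes "\<forall>i<n. c i \<ge> 0 \<and> A i \<in> events \<Sigma> \<and> B i \<in> events \<Sigma> \<and> Pl (B i) \<le> Pl (A i)"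
    and "v = (\<lambda>x. \<Sum>i<n. c i * (evec (A i) x - evec (B i) x))"
  shows "v \<in> plaus_cone \<Sigma> Pl"
  using assms unfolding plaus_cone_def by blast

lemma plaus_cone_E:
  assumes "v \<in> plaus_cone \<Sigma> Pl"
  obtains n :: nat and c :: "nat \<Rightarrow> rat" and A B :: "nat \<Rightarrow> 'a set" where
    "\<forall>i<n. c i \<ge> 0 \<and> A i \<in> events \<Sigma> \<and> B i \<in> events \<Sigma> \<and> Pl (B i) \<le> Pl (A i)"
    "v = (\<lambda>x. \<Sum>i<n. c i * (evec (A i) x - evec (B i) x))"
  using assms unfolding plaus_cone_def mem_Collect_eq by blast

lemma plaus_cone_add:
  assumes "a \<in> plaus_cone \<Sigma> Pl" "b \<in> plaus_cone \<Sigma> Pl"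
  shows "(\<lambda>x. a x + b x) \<in> plaus_cone \<Sigma> Pl"
proof -
  obtain m :: nat and c1 A1 B1 where
    h1: "\<forall>i<m. c1 i \<ge> 0 \<and> A1 i \<in> events \<Sigma> \<and> B1 i \<in> events \<Sigma> \<and> Pl (B1 i) \<le> Pl (A1 i)"
    and a: "a = (\<lambda>x. \<Sum>i<m. c1 i * (evec (A1 i) x - evec (B1 i) x))"
    using assms(1) by (rule plaus_cone_E)
  obtain n :: nat and c2 A2 B2 where
    h2: "\<forall>i<n. c2 i \<ge> 0 \<and> A2 i \<in> events \<Sigma> \<and> B2 i \<in> events \<Sigma> \<and> Pl (B2 i) \<le> Pl (A2 i)"
    and b: "b = (\<lambda>x. \<Sum>i<n. c2 i * (evec (A2 i) x - evec (B2 i) x))"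
    using assms(2) by (rule plaus_cone_E)
  define c where "c i = (if i < m then c1 i else c2 (i - m))" for i
  define A where "A i = (if i < m then A1 i else A2 (i - m))" for i
  define B where "B i = (if i < m then B1 i else B2 (i - m))" for i
  have "\<forall>i<m + n. c i \<ge> 0 \<and> A i \<in> events \<Sigma> \<and> B i \<in> events \<Sigma> \<and> Pl (B i) \<le> Pl (A i)"
    using h1 h2 by (auto simp: c_def A_def B_def)
  moreover have "(\<lambda>x. a x + b x) = (\<lambda>x. \<Sum>i<m + n. c i * (evec (A i) x - evec (B i) x))"
    unfolding a b by (simp add: sum_lessThan_add c_def A_def B_def)
  ultimately show ?thesis
    by (rule plaus_cone_I)
qed

lemma plaus_cone_scale:
  assumes "a \<in> plaus_cone \<Sigma> Pl" "r \<ge> 0"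
  shows "(\<lambda>x. r * a x) \<in> plaus_cone \<Sigma> Pl"
proof -
  obtain n :: nat and c A B where
    h: "\<forall>i<n. c i \<ge> 0 \<and> A i \<in> events \<Sigma> \<and> B i \<in> events \<Sigma> \<and> Pl (B i) \<le> Pl (A i)"
    and a: "a = (\<lambda>x. \<Sum>i<n. c i * (evec (A i) x - evec (B i) x))"
    using assms(1) by (rule plaus_cone_E)
  have "\<forall>i<n. r * c i \<ge> 0 \<and> A i \<in> events \<Sigma> \<and> B i \<in> events \<Sigma> \<and> Pl (B i) \<le> Pl (A i)"
    using h assms(2) by simp
  moreover have "(\<lambda>x. r * a x) = (\<lambda>x. \<Sum>i<n. (r * c i) * (evec (A i) x - evec (B i) x))"
    unfolding a by (simp add: sum_distrib_left mult.assoc)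
  ultimately show ?thesis
    by (rule plaus_cone_I)
qed

lemma plaus_cone_generator:
  assumes "A \<in> events \<Sigma>" "B \<in> events \<Sigma>" "Pl B \<le> Pl A"
  shows "(\<lambda>x. evec A x - evec B x) \<in> plaus_cone \<Sigma> Pl"
  using assms by (intro plaus_cone_I[where n = 1 and c = "\<lambda>_. 1" and A = "\<lambda>_. A" and B = "\<lambda>_. B"]) simp_all

lemma plaus_cone_sum:
  assumes "finite F" "\<And>i. i \<in> F \<Longrightarrow> f i \<in> plaus_cone \<Sigma> Pl"
  shows "(\<lambda>x. \<Sum>i\<in>F. f i x) \<in> plaus_cone \<Sigma> Pl"
  using assms
proof (induction F rule: finite_induct)
  case empty
  show ?case
    by (rule plaus_cone_I[where n = 0 and c = "\<lambda>_. 0" and A = "\<lambda>_. {}" and B = "\<lambda>_. {}"])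
      simp_all
next
  case (insert j F)
  then show ?case
    using plaus_cone_add[of "f j" \<Sigma> Pl "\<lambda>x. \<Sum>i\<in>F. f i x"] by simp
qed

lemma plaus_cone_subset_free_space:
  assumes "test_space X \<Sigma>" "locally_finite \<Sigma>"
  shows "plaus_cone \<Sigma> Pl \<subseteq> free_space X"
proof
  fix v assume "v \<in> plaus_cone \<Sigma> Pl"
  then obtain n :: nat and c A B where
    h: "\<forall>i<n. c i \<ge> 0 \<and> A i \<in> events \<Sigma> \<and> B i \<in> events \<Sigma> \<and> Pl (B i) \<le> Pl (A i)"
    and v: "v = (\<lambda>x. \<Sum>i<n. c i * (evec (A i) x - evec (B i) x))"
    by (rule plaus_cone_E)
  have support: "{x. v x \<noteq> 0} \<subseteq> (\<Union>i<n. A i \<union> B i)"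
  proof
    fix x assume "x \<in> {x. v x \<noteq> 0}"
    then obtain i where "i < n" "c i * (evec (A i) x - evec (B i) x) \<noteq> 0"
      unfolding v by (meson lessThan_iff sum.neutral mem_Collect_eq)
    then show "x \<in> (\<Union>i<n. A i \<union> B i)"
      by (auto simp: evec_def split: if_splits)
  qed
  have "finite (A i \<union> B i) \<and> A i \<union> B i \<subseteq> X" if "i < n" for i
    using h that events_finite_subset[OF assms] by blast
  then have "finite (\<Union>i<n. A i \<union> B i) \<and> (\<Union>i<n. A i \<union> B i) \<subseteq> X"
    by auto
  then show "v \<in> free_space X"
    using support unfolding free_space_def by (auto intro: finite_subset)
qed

lemma convex_cone_plaus_cone:
  assumes "test_space X \<Sigma>" "locally_finite \<Sigma>"
  shows "convex_cone (free_space X) (plaus_cone \<Sigma> Pl)"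
  unfolding convex_cone_def
  using plaus_cone_subset_free_space[OF assms] plaus_cone_add plaus_cone_scale by blast

theorem archimedean_strict_notin_plaus_cone:
  assumes arch: "archimedean X \<Sigma> Pl"
    and A0: "A0 \<in> events \<Sigma>" and B0: "B0 \<in> events \<Sigma>" and less: "Pl A0 < Pl B0"
  shows "(\<lambda>x. evec A0 x - evec B0 x) \<notin> plaus_cone \<Sigma> Pl"
proof
  assume "(\<lambda>x. evec A0 x - evec B0 x) \<in> plaus_cone \<Sigma> Pl"
  then obtain n :: nat and c A B where
    h: "\<forall>i<n. c i \<ge> 0 \<and> A i \<in> events \<Sigma> \<and> B i \<in> events \<Sigma> \<and> Pl (B i) \<le> Pl (A i)"
    and eq: "(\<lambda>x. evec A0 x - evec B0 x) = (\<lambda>x. \<Sum>i<n. c i * (evec (A i) x - evec (B i) x))"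
    by (rule plaus_cone_E)
  obtain d :: nat where "d > 0" and d: "\<forall>i<n. c i * of_nat d \<in> \<int>"
    using rat_common_denominator[OF finite_lessThan, of n c] by auto
  define k where "k i = nat \<lfloor>c i * of_nat d\<rfloor>" for i
  have k: "of_nat (k i) = c i * of_nat d" if "i < n" for i
  proof -
    have "c i * of_nat d \<ge> 0"
      using h that by simp
    then show ?thesis
      using d that by (auto simp: k_def elim!: Ints_cases)
  qed
  define ps where
    "ps = concat (map (\<lambda>i. replicate (k i) (B i, A i)) [0..<n]) @ replicate d (A0, B0)"
  have "(\<Sum>p\<leftarrow>ps. evec (fst p) x - evec (snd p) x) = 0" for x
  proof -
    have "(\<Sum>p\<leftarrow>ps. evec (fst p) x - evec (snd p) x)
        = (\<Sum>i<n. of_nat (k i) * (evec (B i) x - evec (A i) x))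
          + of_nat d * (evec A0 x - evec B0 x)"
      by (simp add: ps_def sum_list_map_concat sum_list_replicate o_def
          flip: sum_set_upt_conv_sum_list_nat atLeast0LessThan)
    also have "\<dots> = (\<Sum>i<n. - of_nat d * (c i * (evec (A i) x - evec (B i) x)))
          + of_nat d * (evec A0 x - evec B0 x)"
      using k by (intro arg_cong2[where f = "(+)"] sum.cong) (simp_all add: algebra_simps)
    also have "\<dots> = - of_nat d * (\<Sum>i<n. c i * (evec (A i) x - evec (B i) x))
          + of_nat d * (evec A0 x - evec B0 x)"
      by (simp only: sum_distrib_left)
    also have "\<dots> = 0"
      by (simp add: fun_cong[OF eq, of x])
    finally show ?thesis .
  qed
  moreover have "\<forall>p\<in>set ps. fst p \<in> events \<Sigma> \<and> snd p \<in> events \<Sigma>"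
    using h A0 B0 by (auto simp: ps_def)
  moreover have "\<forall>p\<in>set (butlast ps). Pl (fst p) \<le> Pl (snd p)"
  proof -
    have "\<forall>p\<in>set ps. Pl (fst p) \<le> Pl (snd p)"
      using h less by (auto simp: ps_def less_imp_le)
    then show ?thesis
      by (meson in_set_butlastD)
  qed
  ultimately have "Pl (snd (last ps)) \<le> Pl (fst (last ps))"
    using \<open>d > 0\<close> by (intro archimedean_balanced_list[OF arch]) (auto simp: ps_def)
  then show False
    using less \<open>d > 0\<close> by (simp add: ps_def)
qed

lemma evec_test_in_plaus_cone:
  assumes "plausibility_measure \<Sigma> Pl" "T \<in> \<Sigma>"
  shows "evec T \<in> plaus_cone \<Sigma> Pl"
proof -
  have "Pl {} < Pl T"
    using assms by (rule plausibility_measure_empty_less)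
  then have "(\<lambda>x. evec T x - evec {} x) \<in> plaus_cone \<Sigma> Pl"
    using assms(2) by (intro plaus_cone_generator test_in_events empty_in_events less_imp_le)
  then show ?thesis
    by simp
qed

lemma uminus_evec_test_notin_plaus_cone:
  assumes "archimedean X \<Sigma> Pl" "plausibility_measure \<Sigma> Pl" "T \<in> \<Sigma>"
  shows "(\<lambda>x. - evec T x) \<notin> plaus_cone \<Sigma> Pl"
proof -
  have "Pl {} < Pl T"
    using assms(2,3) by (rule plausibility_measure_empty_less)
  then have "(\<lambda>x. evec {} x - evec T x) \<notin> plaus_cone \<Sigma> Pl"
    using assms(3) by (intro archimedean_strict_notin_plaus_cone[OF assms(1)] test_in_events empty_in_events)
  then show ?thesis
    by simp
qed

lemma singleton_event_le_test:
  assumes "test_space X \<Sigma>" "plausibility_measure \<Sigma> Pl" "x \<in> X" "T \<in> \<Sigma>"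
  shows "{x} \<in> events \<Sigma> \<and> Pl {} \<le> Pl {x} \<and> Pl {x} \<le> Pl T"
proof -
  obtain R where R: "R \<in> \<Sigma>" "x \<in> R"
    using assms(1,3) unfolding test_space_def by blast
  then have x_event: "{x} \<in> events \<Sigma>"
    unfolding events_def by blast
  have "Pl {} \<le> Pl {x}"
    using R by (intro plausibility_measure_mono[OF assms(2)] empty_in_events x_event) auto
  moreover have "Pl {x} \<le> Pl R"
    using R by (intro plausibility_measure_mono[OF assms(2)] test_in_events x_event) auto
  moreover have "Pl R = Pl T"
    using R(1) assms(4) by (rule plausibility_measure_test_eq[OF assms(2)])
  ultimately show ?thesis
    using x_event by simp
qed

lemma abs_test_plus_singleton_in_plaus_cone:
  assumes "test_space X \<Sigma>" "plausibility_measure \<Sigma> Pl" "x \<in> X" "T \<in> \<Sigma>"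
  shows "(\<lambda>y. \<bar>r\<bar> * evec T y + r * evec {x} y) \<in> plaus_cone \<Sigma> Pl"
proof -
  have x: "{x} \<in> events \<Sigma>" "Pl {} \<le> Pl {x}" "Pl {x} \<le> Pl T"
    using singleton_event_le_test[OF assms] by auto
  have uT: "evec T \<in> plaus_cone \<Sigma> Pl"
    using assms(2,4) by (rule evec_test_in_plaus_cone)
  show ?thesis
  proof (cases "r \<ge> 0")
    case True
    have "evec {x} \<in> plaus_cone \<Sigma> Pl"
      using plaus_cone_generator[OF x(1) empty_in_events[OF assms(4)] x(2)] by simp
    then show ?thesis
      using plaus_cone_add[OF plaus_cone_scale[OF uT True] plaus_cone_scale[OF _ True]] True
      by simp
  next
    case False
    have "(\<lambda>y. evec T y - evec {x} y) \<in> plaus_cone \<Sigma> Pl"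
      using plaus_cone_generator[OF test_in_events[OF assms(4)] x(1) x(3)] .
    then have "(\<lambda>y. (- r) * (evec T y - evec {x} y)) \<in> plaus_cone \<Sigma> Pl"
      using False by (intro plaus_cone_scale) auto
    moreover have "(\<lambda>y. (- r) * (evec T y - evec {x} y)) = (\<lambda>y. \<bar>r\<bar> * evec T y + r * evec {x} y)"
      using False by (auto simp: algebra_simps)
    ultimately show ?thesis
      by simp
  qed
qed

lemma sum_singleton_evecs:
  assumes "finite S" "{x. a x \<noteq> 0} \<subseteq> S"
  shows "(\<Sum>x\<in>S. a x * evec {x} y) = a y"
proof -
  have "(\<Sum>x\<in>S. a x * evec {x} y) = (\<Sum>x\<in>S. if x = y then a y else 0)"
    by (rule sum.cong) (auto simp: evec_def)
  then show ?thesis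
    using assms by auto
qed

lemma evec_test_order_unit:
  assumes "test_space X \<Sigma>" "plausibility_measure \<Sigma> Pl" "T \<in> \<Sigma>" "a \<in> free_space X"
  shows "(\<lambda>y. (\<Sum>x | a x \<noteq> 0. \<bar>a x\<bar>) * evec T y + a y) \<in> plaus_cone \<Sigma> Pl"
proof -
  define S where "S = {x. a x \<noteq> 0}"
  have S: "finite S" "S \<subseteq> X"
    using assms(4) unfolding free_space_def S_def by auto
  have "(\<lambda>y. \<Sum>x\<in>S. \<bar>a x\<bar> * evec T y + a x * evec {x} y) \<in> plaus_cone \<Sigma> Pl"
    using S abs_test_plus_singleton_in_plaus_cone[OF assms(1,2) _ assms(3)]
    by (intro plaus_cone_sum) auto
  moreover have "(\<lambda>y. \<Sum>x\<in>S. \<bar>a x\<bar> * evec T y + a x * evec {x} y)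
               = (\<lambda>y. (\<Sum>x\<in>S. \<bar>a x\<bar>) * evec T y + a y)"
    using S by (simp add: sum.distrib sum_distrib_right sum_singleton_evecs S_def)
  ultimately show ?thesis
    by (simp add: S_def)
qed

theorem mainTheorem3:
  fixes X :: "'a set" and \<Sigma> :: "'a set set" and Pl :: "'a set \<Rightarrow> 'd::order"
  assumes "test_space X \<Sigma>" and "locally_finite \<Sigma>"
    and "plausibility_measure \<Sigma> Pl" and "archimedean X \<Sigma> Pl"
  shows "(\<forall>A\<in>events \<Sigma>. \<forall>B\<in>events \<Sigma>. Pl A < Pl B \<longrightarrow>
            (\<lambda>x. evec A x - evec B x) \<notin> plaus_cone \<Sigma> Pl)
       \<and> (\<forall>T\<in>\<Sigma>. order_unit_space (free_space X) (plaus_cone \<Sigma> Pl) (evec T))"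
proof (intro conjI ballI impI)
  fix A B assume "A \<in> events \<Sigma>" "B \<in> events \<Sigma>" "Pl A < Pl B"
  then show "(\<lambda>x. evec A x - evec B x) \<notin> plaus_cone \<Sigma> Pl"
    by (rule archimedean_strict_notin_plaus_cone[OF assms(4)])
next
  fix T assume "T \<in> \<Sigma>"
  then show "order_unit_space (free_space X) (plaus_cone \<Sigma> Pl) (evec T)"
    unfolding order_unit_space_def
    using convex_cone_plaus_cone[OF assms(1,2)] evec_test_in_plaus_cone[OF assms(3)]
      uminus_evec_test_notin_plaus_cone[OF assms(4,3)] evec_test_order_unit[OF assms(1,3)]
    by blast
qed

end
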